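(* Let $X$ be a class of groups such that $\rho(G)\in X$ for every group $G$, $X$ is closed under normal subgroups, and $X$ contains all abelian groups. Let $G$ be a group and $N$ a normal subgroup of $G$ such that $\rho(N)=\{e\}$ and $\rho(G/N)=\{e\}$. Then $\rho(G)=\{e\}$.
   Context: A class of groups is a class of groups containing the trivial group and closed under isomorphism. For a class $X$ and a group $G$, $\rho(G)=\rho_X(G)$ denotes the subgroup of $G$ generated by all normal subgroups of $G$ that belong to $X$. *)

theory Defs
  imports "HOL-Algebra.Algebra"
begin

text \<open>A class of groups, restricted to groups whose elements live in a fixed type 'c:
  a predicate on group structures that holds only for groups, contains the trivial
  groups and is closed under isomorphism.\<close>
definition group_class :: "('c monoid \<Rightarrow> bool) \<Rightarrow> bool" where
  "group_class P \<longleftrightarrow>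
     (\<forall>H. P H \<longrightarrow> group H) \<and>
     (\<forall>H. group H \<and> carrier H = {one H} \<longrightarrow> P H) \<and>
     (\<forall>H K. group H \<and> group K \<and> is_iso H K \<and> P H \<longrightarrow> P K)"

text \<open>Two such restrictions (to types 'a and 'b) of one and the same class of groups:
  isomorphic groups across the two types are in the class simultaneously.\<close>
definition compatible_classes :: "('a monoid \<Rightarrow> bool) \<Rightarrow> ('b monoid \<Rightarrow> bool) \<Rightarrow> bool" where
  "compatible_classes P Q \<longleftrightarrow>
     (\<forall>H K. group H \<and> group K \<and> is_iso H K \<longrightarrow> (P H \<longleftrightarrow> Q K))"

definition rho :: "('c monoid \<Rightarrow> bool) \<Rightarrow> 'c monoid \<Rightarrow> 'c set" where
  "rho P G = generate G (\<Union>{H. normal H G \<and> P (G\<lparr>carrier := H\<rparr>)})"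

definition rho_in_class :: "('c monoid \<Rightarrow> bool) \<Rightarrow> bool" where
  "rho_in_class P \<longleftrightarrow> (\<forall>H. group H \<longrightarrow> P (H\<lparr>carrier := rho P H\<rparr>))"

definition normal_closed :: "('c monoid \<Rightarrow> bool) \<Rightarrow> bool" where
  "normal_closed P \<longleftrightarrow> (\<forall>H K. P H \<and> normal K H \<longrightarrow> P (H\<lparr>carrier := K\<rparr>))"

definition contains_abelian :: "('c monoid \<Rightarrow> bool) \<Rightarrow> bool" where
  "contains_abelian P \<longleftrightarrow> (\<forall>H. comm_group H \<longrightarrow> P H)"

end

theory Submission
  imports Defs
begin

text \<open>Put \<open>R = \<rho>(G)\<close>. Since \<open>R \<in> X\<close> and \<open>R \<inter> N\<close> is normal in \<open>R\<close>, also \<open>R \<inter> N \<in> X\<close>; being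
  normal in \<open>N\<close>, it lies in \<open>\<rho>(N) = 1\<close>. Hence \<open>R\<close> embeds into \<open>G/N\<close>, and its image \<open>RN/N\<close> is a
  normal subgroup of \<open>G/N\<close> isomorphic to \<open>R\<close>, so it lies in \<open>\<rho>(G/N) = 1\<close>. Thus \<open>R \<subseteq> N\<close>, and
  \<open>R = R \<inter> N = 1\<close>. Only \<open>\<rho>(G) \<in> X\<close>, closure under normal subgroups and isomorphism invariance
  are needed.\<close>

lemma rho_normal:
  fixes G :: "'a monoid"
  assumes "group G"
  shows "rho P G \<lhd> G"
  unfolding rho_def
proof (rule group.normal_generateI[OF assms])
  show "\<Union>{H. H \<lhd> G \<and> P (G\<lparr>carrier := H\<rparr>)} \<subseteq> carrier G"
    by (auto dest: normal_imp_subgroup subgroup.subset)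
next
  fix h g
  assume "h \<in> \<Union>{H. H \<lhd> G \<and> P (G\<lparr>carrier := H\<rparr>)}" and g: "g \<in> carrier G"
  then obtain H where H: "H \<lhd> G" "P (G\<lparr>carrier := H\<rparr>)" "h \<in> H" by blast
  then have "g \<otimes>\<^bsub>G\<^esub> h \<otimes>\<^bsub>G\<^esub> inv\<^bsub>G\<^esub> g \<in> H" using g by (simp add: normal.inv_op_closed2)
  with H show "g \<otimes>\<^bsub>G\<^esub> h \<otimes>\<^bsub>G\<^esub> inv\<^bsub>G\<^esub> g \<in> \<Union>{H. H \<lhd> G \<and> P (G\<lparr>carrier := H\<rparr>)}" by blast
qed

lemma normal_in_class_subset_rho:
  fixes G :: "'a monoid"
  assumes "H \<lhd> G" and "P (G\<lparr>carrier := H\<rparr>)"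
  shows "H \<subseteq> rho P G"
  using assms unfolding rho_def by (auto intro: generate.incl)

lemma rho_Int_normal_subset_rho:
  fixes G :: "'a monoid"
  assumes "group G" and "rho_in_class P" and "normal_closed P" and N: "N \<lhd> G"
  shows "rho P G \<inter> N \<subseteq> rho P (G\<lparr>carrier := N\<rparr>)"
proof -
  define R where "R = rho P G"
  interpret group G by fact
  have R: "R \<lhd> G" unfolding R_def by (rule rho_normal) fact
  have "P (G\<lparr>carrier := R\<rparr>)"
    using assms(1,2) unfolding rho_in_class_def R_def by simp
  moreover have "N \<inter> R \<lhd> G\<lparr>carrier := R\<rparr>"
    using R N by (simp add: normal_Int_subgroup normal_imp_subgroup)
  ultimately have "P ((G\<lparr>carrier := R\<rparr>)\<lparr>carrier := N \<inter> R\<rparr>)"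
    using assms(3) unfolding normal_closed_def by blast
  then have "P (G\<lparr>carrier := R \<inter> N\<rparr>)" by (simp add: Int_commute)
  moreover have "R \<inter> N \<lhd> G\<lparr>carrier := N\<rparr>"
    using R N by (simp add: normal_Int_subgroup normal_imp_subgroup)
  ultimately show ?thesis
    unfolding R_def by (simp add: normal_in_class_subset_rho)
qed

lemma (in normal) rcos_eq_self_iff:
  assumes "x \<in> carrier G"
  shows "H #> x = H \<longleftrightarrow> x \<in> H"
  using assms rcos_self[OF assms subgroup_axioms] rcos_const[OF is_group] by auto

lemma (in normal) rcos_iso_image:
  assumes K: "subgroup K G" and trivial_Int: "K \<inter> H \<subseteq> {\<one>}"
  shows "(\<lambda>a. H #> a) \<in> iso (G\<lparr>carrier := K\<rparr>) ((G Mod H)\<lparr>carrier := (\<lambda>a. H #> a) ` K\<rparr>)"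
proof -
  let ?f = "\<lambda>a. H #> a"
  interpret hom: group_hom G "G Mod H" ?f
    by (simp add: group_hom_def group_hom_axioms_def is_group factorgroup_is_group r_coset_hom_Mod)
  have "kernel (G\<lparr>carrier := K\<rparr>) (G Mod H) ?f = {x \<in> K. H #> x = H}"
    by (simp add: kernel_def)
  also have "\<dots> = K \<inter> H"
    using subgroup.subset[OF K] rcos_eq_self_iff by blast
  also have "\<dots> = {\<one>}"
    using trivial_Int K subgroup.one_closed[OF K] by auto
  finally have "inj_on ?f K"
    using hom.inj_on_subgroup_iff_trivial_ker[OF K] by simp
  moreover have "?f \<in> hom (G\<lparr>carrier := K\<rparr>) ((G Mod H)\<lparr>carrier := ?f ` K\<rparr>)"
  proof (rule homI)
    fix x y assume "x \<in> carrier (G\<lparr>carrier := K\<rparr>)" "y \<in> carrier (G\<lparr>carrier := K\<rparr>)"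
    then have "x \<in> carrier G" "y \<in> carrier G" using subgroup.subset[OF K] by auto
    then show "?f (x \<otimes>\<^bsub>G\<lparr>carrier := K\<rparr>\<^esub> y) = ?f x \<otimes>\<^bsub>(G Mod H)\<lparr>carrier := ?f ` K\<rparr>\<^esub> ?f y"
      using rcos_sum[of x y] by (simp add: FactGroup_def)
  qed simp
  ultimately show ?thesis by (simp add: iso_def bij_betw_def)
qed

lemma rcos_image_subset_rho_Mod:
  fixes G :: "'a monoid"
  assumes "H \<lhd> G" and "compatible_classes P Q" and K: "K \<lhd> G" and "K \<inter> H \<subseteq> {\<one>\<^bsub>G\<^esub>}"
    and "P (G\<lparr>carrier := K\<rparr>)"
  shows "(\<lambda>a. H #>\<^bsub>G\<^esub> a) ` K \<subseteq> rho Q (G Mod H)"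
proof -
  interpret normal H G by fact
  let ?I = "(\<lambda>a. H #>\<^bsub>G\<^esub> a) ` K"
  have hom: "group_hom G (G Mod H) (\<lambda>a. H #>\<^bsub>G\<^esub> a)"
    by (simp add: group_hom_def group_hom_axioms_def is_group factorgroup_is_group r_coset_hom_Mod)
  have I: "?I \<lhd> G Mod H"
    using normal.surj_hom_normal_subgroup[OF K hom] by (simp add: carrier_FactGroup)
  have "group (G\<lparr>carrier := K\<rparr>)" and "group ((G Mod H)\<lparr>carrier := ?I\<rparr>)"
    using K I factorgroup_is_group
    by (simp_all add: normal_imp_subgroup subgroup_imp_group group.subgroup_imp_group)
  then have "Q ((G Mod H)\<lparr>carrier := ?I\<rparr>)"
    using assms rcos_iso_image[OF normal_imp_subgroup[OF K]]
    unfolding compatible_classes_def is_iso_def by blast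
  with I show ?thesis by (rule normal_in_class_subset_rho)
qed

theorem lemma6p9:
  fixes P :: "'a monoid \<Rightarrow> bool" and Q :: "'a set monoid \<Rightarrow> bool"
    and G :: "'a monoid" and N :: "'a set"
  assumes "group_class P" and "group_class Q" and "compatible_classes P Q"
    and "rho_in_class P" and "rho_in_class Q"
    and "normal_closed P" and "normal_closed Q"
    and "contains_abelian P" and "contains_abelian Q"
    and "group G" and "N \<lhd> G"
    and "rho P (G\<lparr>carrier := N\<rparr>) = {\<one>\<^bsub>G\<^esub>}"
    and "rho Q (G Mod N) = {\<one>\<^bsub>G Mod N\<^esub>}"
  shows "rho P G = {\<one>\<^bsub>G\<^esub>}"
proof -
  interpret G: group G by fact
  interpret N: normal N G by fact
  define R where "R = rho P G"
  have R: "R \<lhd> G" unfolding R_def by (rule rho_normal) fact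
  have R_Int_N: "R \<inter> N \<subseteq> {\<one>\<^bsub>G\<^esub>}"
    using rho_Int_normal_subset_rho[OF assms(10,4,6,11)] assms(12) by (simp add: R_def)
  have "P (G\<lparr>carrier := R\<rparr>)"
    using assms(4,10) unfolding rho_in_class_def R_def by simp
  then have image: "(\<lambda>a. N #>\<^bsub>G\<^esub> a) ` R \<subseteq> {N}"
    using rcos_image_subset_rho_Mod[OF assms(11,3) R R_Int_N] assms(13) by simp
  have "R \<subseteq> N"
  proof
    fix r assume r: "r \<in> R"
    then have "r \<in> carrier G" using R by (meson normal_imp_subgroup subgroup.mem_carrier)
    moreover have "N #>\<^bsub>G\<^esub> r = N" using image r by blast
    ultimately show "r \<in> N" using N.rcos_eq_self_iff by blast
  qed
  with R_Int_N have "R \<subseteq> {\<one>\<^bsub>G\<^esub>}" by blast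
  moreover have "\<one>\<^bsub>G\<^esub> \<in> R" using R by (simp add: normal_imp_subgroup subgroup.one_closed)
  ultimately show ?thesis unfolding R_def by blast
qed

end
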